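(* Let $q=2^r$ with $r$ even, and $n\ge 1$. Let: - $g\in\mathbb{F}_q[x_1,\dots,x_n]$ be a polynomial of total degree $n(q-1)/3$; - $f\in\mathbb{F}_q[y]$ be a permutation polynomial of degree $q-2$; - $a\in\mathbb{F}_q$ be an element that is not a cube in $\mathbb{F}_q$. Then $$h(x_1,\dots,x_n,y)=\bigl(g(x_1,\dots,x_n)^3-a\bigr)f(y)$$ is a permutation polynomial in $\mathbb{F}_q[x_1,\dots,x_n,y]$.
   Context: $\mathbb{F}_q$ is the finite field with $q$ elements. A polynomial in $m$ variables over $\mathbb{F}_q$ is a permutation polynomial (PP) if, for every $c\in\mathbb{F}_q$, the equation $h=c$ has exactly $q^{m-1}$ solutions in $\mathbb{F}_q^m$. A univariate PP is a polynomial inducing a bijection of $\mathbb{F}_q$. *)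

theory Defs
  imports "HOL-Library.Poly_Mapping" "HOL-Computational_Algebra.Polynomial"
begin

text \<open>Multivariate polynomials over a ring 'a in the variables x_0, x_1, ...:
  finitely supported maps from exponent vectors (monomials) to coefficients.
  Multiplication is the convolution product provided by Poly_Mapping.\<close>
type_synonym 'a mpoly = "(nat \<Rightarrow>\<^sub>0 nat) \<Rightarrow>\<^sub>0 'a"

definition mpoly_eval :: "'a::comm_semiring_1 mpoly \<Rightarrow> (nat \<Rightarrow> 'a) \<Rightarrow> 'a" where
  "mpoly_eval p x = (\<Sum>m\<in>Poly_Mapping.keys p. Poly_Mapping.lookup p m * (\<Prod>i\<in>Poly_Mapping.keys m. x i ^ Poly_Mapping.lookup m i))"

definition mono_degree :: "(nat \<Rightarrow>\<^sub>0 nat) \<Rightarrow> nat" where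
  "mono_degree m = (\<Sum>i\<in>Poly_Mapping.keys m. Poly_Mapping.lookup m i)"

definition total_degree :: "'a::zero mpoly \<Rightarrow> nat" where
  "total_degree p = Max (insert 0 (mono_degree ` Poly_Mapping.keys p))"

definition vars_below :: "'a::zero mpoly \<Rightarrow> nat \<Rightarrow> bool" where
  "vars_below p n \<longleftrightarrow> (\<forall>m\<in>Poly_Mapping.keys p. Poly_Mapping.keys m \<subseteq> {..<n})"

definition mconst :: "'a::zero \<Rightarrow> 'a mpoly" where
  "mconst c = Poly_Mapping.single 0 c"

definition poly_in_var :: "'a::comm_monoid_add poly \<Rightarrow> nat \<Rightarrow> 'a mpoly" where
  "poly_in_var f k = (\<Sum>i\<le>degree f. Poly_Mapping.single (Poly_Mapping.single k i) (coeff f i))"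

text \<open>Points of F^n, encoded as functions vanishing outside {0..<n}.\<close>
definition points :: "nat \<Rightarrow> (nat \<Rightarrow> 'a::zero) set" where
  "points n = {x. \<forall>i\<ge>n. x i = 0}"

definition is_PP :: "nat \<Rightarrow> 'a::{finite,field} mpoly \<Rightarrow> bool" where
  "is_PP m p \<longleftrightarrow> (\<forall>c. card {x \<in> points m. mpoly_eval p x = c} = card (UNIV :: 'a set) ^ (m - 1))"

definition univ_PP :: "'a::{finite,field} poly \<Rightarrow> bool" where
  "univ_PP f \<longleftrightarrow> bij (poly f)"

definition is_cube :: "'a::field \<Rightarrow> bool" where
  "is_cube a \<longleftrightarrow> (\<exists>b. b ^ 3 = a)"

end

theory Submission
  imports Defs "HOL-Library.FuncSet"
begin

text \<open>Since \<open>a\<close> is not a cube, \<open>u(x) = g(x)^3 - a\<close> vanishes nowhere, and \<open>u\<close> does not involve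
  the last variable \<open>y\<close>. Hence for every \<open>c\<close> and every \<open>x \<in> F_q^n\<close> the equation \<open>u(x) f(y) = c\<close>
  has exactly one solution \<open>y = f\<^sup>-\<^sup>1(c / u(x))\<close>, so \<open>h = c\<close> has \<open>q^n\<close> solutions.\<close>

definition monom_eval :: "(nat \<Rightarrow> 'a::comm_semiring_1) \<Rightarrow> (nat \<Rightarrow>\<^sub>0 nat) \<Rightarrow> 'a" where
  "monom_eval x m = (\<Prod>i\<in>Poly_Mapping.keys m. x i ^ Poly_Mapping.lookup m i)"

lemma monom_eval_superset:
  assumes "finite S" "Poly_Mapping.keys m \<subseteq> S"
  shows "monom_eval x m = (\<Prod>i\<in>S. x i ^ Poly_Mapping.lookup m i)"
  unfolding monom_eval_def
  by (rule prod.mono_neutral_left[OF assms]) (auto simp: in_keys_iff)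

lemma monom_eval_add: "monom_eval x (m1 + m2) = monom_eval x m1 * monom_eval x m2"
proof -
  let ?S = "Poly_Mapping.keys m1 \<union> Poly_Mapping.keys m2"
  have S: "finite ?S" by simp
  have "monom_eval x (m1 + m2) = (\<Prod>i\<in>?S. x i ^ Poly_Mapping.lookup (m1 + m2) i)"
    by (rule monom_eval_superset[OF S]) (metis keys_add)
  also have "\<dots> = (\<Prod>i\<in>?S. x i ^ Poly_Mapping.lookup m1 i) * (\<Prod>i\<in>?S. x i ^ Poly_Mapping.lookup m2 i)"
    by (simp add: lookup_add power_add prod.distrib)
  finally show ?thesis
    using monom_eval_superset[OF S, of m1 x] monom_eval_superset[OF S, of m2 x] by simp
qed

lemma mpoly_eval_superset:
  assumes "finite S" "Poly_Mapping.keys p \<subseteq> S"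
  shows "mpoly_eval p x = (\<Sum>m\<in>S. Poly_Mapping.lookup p m * monom_eval x m)"
  unfolding mpoly_eval_def monom_eval_def[symmetric]
  by (rule sum.mono_neutral_left[OF assms]) (auto simp: in_keys_iff)

lemma mpoly_eval_add: "mpoly_eval (p + q) x = mpoly_eval p x + mpoly_eval q x"
proof -
  let ?S = "Poly_Mapping.keys p \<union> Poly_Mapping.keys q"
  have S: "finite ?S" by simp
  have "mpoly_eval (p + q) x = (\<Sum>m\<in>?S. Poly_Mapping.lookup (p + q) m * monom_eval x m)"
    by (rule mpoly_eval_superset[OF S]) (metis keys_add)
  also have "\<dots> = (\<Sum>m\<in>?S. Poly_Mapping.lookup p m * monom_eval x m)
                  + (\<Sum>m\<in>?S. Poly_Mapping.lookup q m * monom_eval x m)"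
    by (simp add: lookup_add distrib_right sum.distrib)
  finally show ?thesis
    using mpoly_eval_superset[OF S, of p x] mpoly_eval_superset[OF S, of q x] by simp
qed

lemma mpoly_eval_diff:
  "mpoly_eval ((p::'a::comm_ring_1 mpoly) - q) x = mpoly_eval p x - mpoly_eval q x"
  using mpoly_eval_add[of "p - q" q x] by (simp add: eq_diff_eq)

lemma mpoly_eval_single: "mpoly_eval (Poly_Mapping.single m c) x = c * monom_eval x m"
  by (subst mpoly_eval_superset[of "{m}"]) auto

lemma mpoly_eval_sum: "mpoly_eval (\<Sum>i\<in>I. F i) x = (\<Sum>i\<in>I. mpoly_eval (F i) x)"
  by (induction I rule: infinite_finite_induct) (simp_all add: mpoly_eval_add mpoly_eval_def[of 0])

lemma mpoly_sum_singles:
  "p = (\<Sum>m\<in>Poly_Mapping.keys p. Poly_Mapping.single m (Poly_Mapping.lookup p m))"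
  by (rule poly_mapping_eqI)
     (auto simp: lookup_sum lookup_single when_def in_keys_iff sum.delta)

lemma mpoly_eval_mult:
  "mpoly_eval ((p::'a::comm_semiring_1 mpoly) * q) x = mpoly_eval p x * mpoly_eval q x"
proof -
  let ?P = "Poly_Mapping.keys p" and ?Q = "Poly_Mapping.keys q"
  have "p * q = (\<Sum>m\<in>?P. Poly_Mapping.single m (Poly_Mapping.lookup p m))
              * (\<Sum>m'\<in>?Q. Poly_Mapping.single m' (Poly_Mapping.lookup q m'))"
    using mpoly_sum_singles[of p] mpoly_sum_singles[of q] by simp
  also have "\<dots> = (\<Sum>m\<in>?P. \<Sum>m'\<in>?Q.
      Poly_Mapping.single (m + m') (Poly_Mapping.lookup p m * Poly_Mapping.lookup q m'))"
    by (simp add: sum_product mult_single)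
  finally have "mpoly_eval (p * q) x = (\<Sum>m\<in>?P. \<Sum>m'\<in>?Q.
      Poly_Mapping.lookup p m * monom_eval x m * (Poly_Mapping.lookup q m' * monom_eval x m'))"
    by (simp add: mpoly_eval_sum mpoly_eval_single monom_eval_add mult_ac)
  then show ?thesis
    by (simp add: mpoly_eval_def monom_eval_def sum_product)
qed

lemma mpoly_eval_mconst: "mpoly_eval (mconst c) x = c"
  by (simp add: mconst_def mpoly_eval_single monom_eval_def)

lemma mpoly_eval_poly_in_var: "mpoly_eval (poly_in_var f k) x = poly f (x k)"
proof -
  have "monom_eval x (Poly_Mapping.single k i) = x k ^ i" for i
    by (cases "i = 0") (auto simp: monom_eval_def)
  then show ?thesis
    by (simp add: poly_in_var_def mpoly_eval_sum mpoly_eval_single poly_altdef)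
qed

lemma mpoly_eval_cong_vars_below:
  assumes "vars_below p n" "\<And>i. i < n \<Longrightarrow> x i = y i"
  shows "mpoly_eval p x = mpoly_eval p y"
  unfolding mpoly_eval_def
proof (intro sum.cong refl arg_cong[where f = "(*) _"] prod.cong)
  fix m i assume "m \<in> Poly_Mapping.keys p" "i \<in> Poly_Mapping.keys m"
  with assms(1) have "i < n" by (auto simp: vars_below_def)
  with assms(2) show "x i ^ Poly_Mapping.lookup m i = y i ^ Poly_Mapping.lookup m i" by simp
qed

lemma card_points: "card (points n :: (nat \<Rightarrow> 'a::{finite,zero}) set) = card (UNIV :: 'a set) ^ n"
proof -
  have "bij_betw (\<lambda>x. restrict x {..<n}) (points n :: (nat \<Rightarrow> 'a) set) (PiE {..<n} (\<lambda>_. UNIV))"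
  proof (rule bij_betw_byWitness[where f' = "\<lambda>y i. if i < n then y i else 0"])
    show "\<forall>x\<in>points n. (\<lambda>i. if i < n then restrict x {..<n} i else 0) = x"
      by (simp add: points_def fun_eq_iff)
    show "\<forall>y\<in>PiE {..<n} (\<lambda>_. UNIV). restrict (\<lambda>i. if i < n then y i else 0) {..<n} = (y :: nat \<Rightarrow> 'a)"
      by (auto simp: PiE_def extensional_def fun_eq_iff)
  qed (auto simp: points_def image_subset_iff)
  then show ?thesis
    by (simp add: bij_betw_same_card card_PiE)
qed

text \<open>Overwriting the last coordinate of a point of \<open>F^n\<close> by the unique solution \<open>\<phi>\<^sup>-\<^sup>1(c / U x)\<close> is a bijection onto the solution set.\<close>
lemma card_points_Suc_mult_bij:
  fixes U :: "(nat \<Rightarrow> 'a::{finite,field}) \<Rightarrow> 'a"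
  assumes \<phi>: "bij \<phi>" and U_nonzero: "\<And>x. U x \<noteq> 0"
    and U_upd: "\<And>x t. U (x(n := t)) = U x"
  shows "card {x \<in> points (Suc n). U x * \<phi> (x n) = c} = card (UNIV :: 'a set) ^ n"
proof -
  let ?S = "{x \<in> points (Suc n). U x * \<phi> (x n) = c}"
  define s where "s x = inv \<phi> (c / U x)" for x
  have \<phi>_eq_iff: "\<phi> t = c / U x \<longleftrightarrow> t = s x" for t x
    unfolding s_def using \<phi> by (metis bij_inv_eq_iff)
  have \<phi>_s: "U x * \<phi> (s x) = c" for x
    using U_nonzero[of x] \<phi>_eq_iff[of "s x" x] by (simp add: field_simps)
  have "bij_betw (\<lambda>x. x(n := s x)) (points n) ?S"
  proof (rule bij_betw_byWitness[where f' = "\<lambda>z. z(n := 0)"])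
    show "\<forall>z\<in>?S. (z(n := 0))(n := s (z(n := 0))) = z"
    proof
      fix z assume "z \<in> ?S"
      then have "\<phi> (z n) = c / U (z(n := 0))"
        using U_nonzero[of z] U_upd[of z 0] by (simp add: field_simps)
      then show "(z(n := 0))(n := s (z(n := 0))) = z"
        by (auto simp: \<phi>_eq_iff fun_eq_iff)
    qed
    show "(\<lambda>x. x(n := s x)) ` points n \<subseteq> ?S"
      using \<phi>_s U_upd by (auto simp: points_def)
  qed (auto simp: points_def fun_eq_iff)
  then show ?thesis
    using card_points[where 'a = 'a, of n] by (simp add: bij_betw_same_card)
qed

theorem mainTheorem7:
  fixes g :: "'a::{finite,field} mpoly" and f :: "'a poly" and a :: 'a
    and r n :: nat
  assumes "card (UNIV :: 'a set) = 2 ^ r" and "even r" and "n \<ge> 1"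
    and "vars_below g n"
    and "total_degree g = n * (card (UNIV :: 'a set) - 1) div 3"
    and "univ_PP f" and "degree f = card (UNIV :: 'a set) - 2"
    and "\<not> is_cube a"
  shows "is_PP (n + 1) ((g ^ 3 - mconst a) * poly_in_var f n)"
  unfolding is_PP_def
proof
  fix c :: 'a
  let ?U = "\<lambda>x. mpoly_eval g x ^ 3 - a"
  have eval_h: "mpoly_eval ((g ^ 3 - mconst a) * poly_in_var f n) x = ?U x * poly f (x n)" for x
    by (simp add: mpoly_eval_mult mpoly_eval_diff mpoly_eval_mconst mpoly_eval_poly_in_var
        power3_eq_cube)
  have "card {x \<in> points (Suc n). ?U x * poly f (x n) = c} = card (UNIV :: 'a set) ^ n"
  proof (rule card_points_Suc_mult_bij)
    show "bij (poly f)" using \<open>univ_PP f\<close> by (simp add: univ_PP_def)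
    show "?U x \<noteq> 0" for x using \<open>\<not> is_cube a\<close> by (auto simp: is_cube_def)
    show "?U (x(n := t)) = ?U x" for x t
      using mpoly_eval_cong_vars_below[OF \<open>vars_below g n\<close>, of "x(n := t)" x] by simp
  qed
  then show "card {x \<in> points (n + 1). mpoly_eval ((g ^ 3 - mconst a) * poly_in_var f n) x = c}
      = card (UNIV :: 'a set) ^ (n + 1 - 1)"
    by (simp add: eval_h)
qed

end
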